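(* Let $a,b,\alpha,\beta$ be complex numbers with $\beta a-\alpha b\neq0$, let $n\ge1$, and write $\Psi_r(m)=\Psi\left(\begin{array}{cc|c} a & b & m \\ \alpha & \beta & r \end{array}\right)$, $\Phi_r(m)=\Phi\left(\begin{array}{cc|c} a & b & m \\ \alpha & \beta & r \end{array}\right)$. Then for $0\le r\le\lfloor (n-1)/2\rfloor$, \[ \Phi_r(n)=\frac{(2\alpha-\beta)\big(\lfloor (n+1)/2\rfloor-r\big)\Psi_r(n+1)+(2a-b)(r+1)\Psi_{r+1}(n+1)}{(\beta a-\alpha b)(n+1)}. \]
   Context: $\delta(m)=1$ for $m$ odd, $0$ for $m$ even; $\lfloor\cdot\rfloor$ is the floor. For $m\ge1$ and numbers with $\beta a-\alpha b\ne0$, $\Psi\left(\begin{array}{cc|c} a & b & m \\ \alpha & \beta & r \end{array}\right)$ ($0\le r\le\lfloor m/2\rfloor$) and $\Phi\left(\begin{array}{cc|c} a & b & m \\ \alpha & \beta & r \end{array}\right)$ ($0\le r\le\lfloor (m-1)/2\rfloor$) are the unique numbers such that, identically in $x,y$, $(\beta a-\alpha b)^{\lfloor m/2\rfloor}\frac{x^m+y^m}{(x+y)^{\delta(m)}}=\sum_{r}\Psi\left(\begin{array}{cc|c} a & b & m \\ \alpha & \beta & r \end{array}\right)(\alpha x^2+\beta xy+\alpha y^2)^{\lfloor m/2\rfloor-r}(ax^2+bxy+ay^2)^r$ and $(\beta a-\alpha b)^{\lfloor (m-1)/2\rfloor}\frac{x^m-y^m}{(x-y)(x+y)^{\delta(m-1)}}=\sum_{r}\Phi\left(\begin{array}{cc|c}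 a & b & m \\ \alpha & \beta & r \end{array}\right)(\alpha x^2+\beta xy+\alpha y^2)^{\lfloor (m-1)/2\rfloor-r}(ax^2+bxy+ay^2)^r$. *)

theory Defs
  imports Complex_Main
begin

definition delta :: "nat \<Rightarrow> nat" where
  "delta m = (if odd m then 1 else 0)"

definition Psi :: "complex \<Rightarrow> complex \<Rightarrow> complex \<Rightarrow> complex \<Rightarrow> nat \<Rightarrow> nat \<Rightarrow> complex" where
  "Psi a b \<alpha> \<beta> m = (THE c. (\<forall>r. m div 2 < r \<longrightarrow> c r = 0) \<and>
     (\<forall>x y :: complex. (x + y) ^ delta m \<noteq> 0 \<longrightarrow>
        (\<beta> * a - \<alpha> * b) ^ (m div 2) * ((x ^ m + y ^ m) / (x + y) ^ delta m) =
        (\<Sum>r\<le>m div 2. c r * (\<alpha> * x^2 + \<beta> * x * y + \<alpha> * y^2) ^ (m div 2 - r)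
                              * (a * x^2 + b * x * y + a * y^2) ^ r)))"

definition Phi :: "complex \<Rightarrow> complex \<Rightarrow> complex \<Rightarrow> complex \<Rightarrow> nat \<Rightarrow> nat \<Rightarrow> complex" where
  "Phi a b \<alpha> \<beta> m = (THE c. (\<forall>r. (m - 1) div 2 < r \<longrightarrow> c r = 0) \<and>
     (\<forall>x y :: complex. (x - y) * (x + y) ^ delta (m - 1) \<noteq> 0 \<longrightarrow>
        (\<beta> * a - \<alpha> * b) ^ ((m - 1) div 2) * ((x ^ m - y ^ m) / ((x - y) * (x + y) ^ delta (m - 1))) =
        (\<Sum>r\<le>(m - 1) div 2. c r * (\<alpha> * x^2 + \<beta> * x * y + \<alpha> * y^2) ^ ((m - 1) div 2 - r)
                              * (a * x^2 + b * x * y + a * y^2) ^ r)))"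

end

theory Submission
  imports Defs
begin

text \<open>Write \<open>P = \<alpha> x\<^sup>2 + \<beta> x y + \<alpha> y\<^sup>2\<close> and \<open>Q = a x\<^sup>2 + b x y + a y\<^sup>2\<close>. When
  \<open>\<beta> a - \<alpha> b \<noteq> 0\<close>, an expansion as a binary form in \<open>P, Q\<close> determines its coefficients,
  because \<open>(P, Q)\<close> takes the value \<open>(1, t)\<close> for all but finitely many \<open>t\<close>; the Psi expansion
  exists by the recurrence for \<open>x\<^sup>m + y\<^sup>m\<close>. The operator \<open>\<partial>\<^sub>x - \<partial>\<^sub>y\<close> kills \<open>x + y\<close>,
  maps \<open>x\<^bsup>n+1\<^esup> + y\<^bsup>n+1\<^esup>\<close> to \<open>(n + 1)(x\<^sup>n - y\<^sup>n)\<close>, and maps \<open>P, Q\<close> to \<open>(2\<alpha> - \<beta>)(x - y)\<close>,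
  \<open>(2a - b)(x - y)\<close>. Applying it to the Psi identity for \<open>n + 1\<close> and dividing by \<open>x - y\<close> gives
  an expansion of \<open>(x\<^sup>n - y\<^sup>n) / ((x - y)(x + y)\<^bsup>\<delta>(n-1)\<^esup>)\<close> whose coefficients are the claimed
  combinations of Psi coefficients; by uniqueness they are the Phi coefficients.\<close>

definition qform :: "'a::comm_ring_1 \<Rightarrow> 'a \<Rightarrow> 'a \<Rightarrow> 'a \<Rightarrow> 'a" where
  "qform A B x y = A * x\<^sup>2 + B * x * y + A * y\<^sup>2"

lemma qform_sum_squares:
  "(- b) * qform \<alpha> \<beta> x y + \<beta> * qform a b x y = (\<beta> * a - \<alpha> * b) * (x\<^sup>2 + y\<^sup>2)"
  unfolding qform_def by (simp add: algebra_simps power2_eq_square)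

lemma qform_product:
  "a * qform \<alpha> \<beta> x y + (- \<alpha>) * qform a b x y = (\<beta> * a - \<alpha> * b) * (x * y)"
  unfolding qform_def by (simp add: algebra_simps power2_eq_square)

lemma qform_shift_has_field_derivative:
  fixes A B x y :: "'a::real_normed_field"
  shows "((\<lambda>t. qform A B (x + t) (y - t)) has_field_derivative (2 * A - B) * (x - y)) (at 0)"
  unfolding qform_def by (auto intro!: derivative_eq_intros simp: algebra_simps)

definition binary_form :: "nat \<Rightarrow> (nat \<Rightarrow> 'a::comm_ring_1) \<Rightarrow> 'a \<Rightarrow> 'a \<Rightarrow> 'a" where
  "binary_form k c X Y = (\<Sum>r\<le>k. c r * X ^ (k - r) * Y ^ r)"

lemma binary_form_cong:
  "(\<And>r. r \<le> k \<Longrightarrow> c r = d r) \<Longrightarrow> binary_form k c X Y = binary_form k d X Y"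
  unfolding binary_form_def by (rule sum.cong) auto

lemma binary_form_add:
  "binary_form k (\<lambda>r. c r + d r) X Y = binary_form k c X Y + binary_form k d X Y"
  unfolding binary_form_def by (simp add: algebra_simps sum.distrib)

lemma binary_form_scale: "binary_form k (\<lambda>r. s * c r) X Y = s * binary_form k c X Y"
  unfolding binary_form_def by (simp add: algebra_simps sum_distrib_left)

lemma binary_form_Suc_left:
  assumes "c (Suc k) = 0"
  shows "binary_form (Suc k) c X Y = X * binary_form k c X Y"
proof -
  have "binary_form (Suc k) c X Y = (\<Sum>r\<le>k. X * (c r * X ^ (k - r) * Y ^ r))"
    unfolding binary_form_def using assms by (auto simp: Suc_diff_le intro!: sum.cong)
  then show ?thesis
    unfolding binary_form_def by (simp add: sum_distrib_left)
qed

lemma binary_form_Suc_right: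
  "binary_form (Suc k) (case_nat 0 c) X Y = Y * binary_form k c X Y"
  unfolding binary_form_def sum.atMost_Suc_shift by (simp add: sum_distrib_left algebra_simps)

lemma binary_form_at_one: "binary_form k c 1 t = (\<Sum>r\<le>k. c r * t ^ r)"
  unfolding binary_form_def by simp

lemma binary_form_has_field_derivative:
  fixes p q :: "'a::real_normed_field \<Rightarrow> 'a"
  assumes "(p has_field_derivative p') (at t)" and "(q has_field_derivative q') (at t)"
  shows "((\<lambda>t. binary_form (Suc j) c (p t) (q t)) has_field_derivative
      binary_form j (\<lambda>r. of_nat (Suc j - r) * p' * c r + of_nat (Suc r) * q' * c (Suc r))
        (p t) (q t)) (at t)"
proof -
  define X where "X r = of_nat (Suc j - r) * p' * c r * p t ^ (j - r) * q t ^ r" for r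
  define Y where "Y r = of_nat r * q' * c r * p t ^ (Suc j - r) * q t ^ (r - 1)" for r
  have "((\<lambda>t. binary_form (Suc j) c (p t) (q t)) has_field_derivative
      (\<Sum>r\<le>Suc j. X r) + (\<Sum>r\<le>Suc j. Y r)) (at t)"
    unfolding binary_form_def sum.distrib[symmetric] X_def Y_def
    by (rule derivative_eq_intros assms refl)+ (simp add: algebra_simps)
  also have "(\<Sum>r\<le>Suc j. X r) = (\<Sum>r\<le>j. X r)"
    by (simp add: X_def)
  also have "(\<Sum>r\<le>Suc j. Y r) = (\<Sum>r\<le>j. Y (Suc r))"
    by (simp only: sum.atMost_Suc_shift) (simp add: Y_def)
  also have "(\<Sum>r\<le>j. X r) + (\<Sum>r\<le>j. Y (Suc r)) =
      binary_form j (\<lambda>r. of_nat (Suc j - r) * p' * c r + of_nat (Suc r) * q' * c (Suc r))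
        (p t) (q t)"
    unfolding binary_form_def sum.distrib[symmetric] X_def Y_def by (simp add: algebra_simps)
  finally show ?thesis .
qed

definition hom_in_qforms ::
    "'a::comm_ring_1 \<Rightarrow> 'a \<Rightarrow> 'a \<Rightarrow> 'a \<Rightarrow> nat \<Rightarrow> ('a \<Rightarrow> 'a \<Rightarrow> 'a) \<Rightarrow> bool"
  where "hom_in_qforms a b \<alpha> \<beta> k f \<longleftrightarrow> (\<exists>c. (\<forall>r. k < r \<longrightarrow> c r = 0) \<and>
    (\<forall>x y. f x y = binary_form k c (qform \<alpha> \<beta> x y) (qform a b x y)))"

lemma hom_in_qforms_cong:
  assumes "hom_in_qforms a b \<alpha> \<beta> k f" and "k = k'" and "\<And>x y. f x y = g x y"
  shows "hom_in_qforms a b \<alpha> \<beta> k' g"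
proof -
  have "f = g" using assms(3) by (intro ext)
  with assms(1,2) show ?thesis by simp
qed

lemma hom_in_qforms_const: "hom_in_qforms a b \<alpha> \<beta> 0 (\<lambda>x y. s)"
  unfolding hom_in_qforms_def binary_form_def
  by (rule exI[of _ "\<lambda>r. if r = 0 then s else 0"]) auto

lemma hom_in_qforms_add:
  assumes "hom_in_qforms a b \<alpha> \<beta> k f" and "hom_in_qforms a b \<alpha> \<beta> k g"
  shows "hom_in_qforms a b \<alpha> \<beta> k (\<lambda>x y. f x y + g x y)"
proof -
  obtain c d where "\<forall>r. k < r \<longrightarrow> c r = 0" "\<forall>r. k < r \<longrightarrow> d r = 0"
    and "\<forall>x y. f x y = binary_form k c (qform \<alpha> \<beta> x y) (qform a b x y)"
    and "\<forall>x y. g x y = binary_form k d (qform \<alpha> \<beta> x y) (qform a b x y)"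
    using assms unfolding hom_in_qforms_def by blast
  then show ?thesis
    unfolding hom_in_qforms_def
    by (intro exI[of _ "\<lambda>r. c r + d r"]) (simp add: binary_form_add)
qed

lemma hom_in_qforms_scale:
  assumes "hom_in_qforms a b \<alpha> \<beta> k f"
  shows "hom_in_qforms a b \<alpha> \<beta> k (\<lambda>x y. s * f x y)"
proof -
  obtain c where "\<forall>r. k < r \<longrightarrow> c r = 0"
    and "\<forall>x y. f x y = binary_form k c (qform \<alpha> \<beta> x y) (qform a b x y)"
    using assms unfolding hom_in_qforms_def by blast
  then show ?thesis
    unfolding hom_in_qforms_def
    by (intro exI[of _ "\<lambda>r. s * c r"]) (simp add: binary_form_scale)
qed

lemma hom_in_qforms_mult_linear:
  assumes "hom_in_qforms a b \<alpha> \<beta> k f"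
  shows "hom_in_qforms a b \<alpha> \<beta> (Suc k)
    (\<lambda>x y. (p * qform \<alpha> \<beta> x y + q * qform a b x y) * f x y)"
proof -
  obtain c where c: "\<forall>r. k < r \<longrightarrow> c r = 0"
    and f: "\<forall>x y. f x y = binary_form k c (qform \<alpha> \<beta> x y) (qform a b x y)"
    using assms unfolding hom_in_qforms_def by blast
  define c' where "c' r = p * c r + q * case_nat 0 c r" for r
  have "binary_form (Suc k) c' X Y = (p * X + q * Y) * binary_form k c X Y" for X Y
  proof -
    have "binary_form (Suc k) c' X Y =
        p * binary_form (Suc k) c X Y + q * binary_form (Suc k) (case_nat 0 c) X Y"
      unfolding c'_def by (simp only: binary_form_add binary_form_scale)
    also have "\<dots> = p * (X * binary_form k c X Y) + q * (Y * binary_form k c X Y)"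
      using c by (simp only: binary_form_Suc_left binary_form_Suc_right lessI)
    finally show ?thesis by (simp only: algebra_simps)
  qed
  moreover have "\<forall>r. Suc k < r \<longrightarrow> c' r = 0"
    using c by (auto simp: c'_def split: nat.split)
  ultimately show ?thesis
    unfolding hom_in_qforms_def using f by metis
qed

fun power_sum_quotient :: "nat \<Rightarrow> 'a::comm_ring_1 \<Rightarrow> 'a \<Rightarrow> 'a" where
  "power_sum_quotient 0 x y = 2"
| "power_sum_quotient (Suc 0) x y = 1"
| "power_sum_quotient (Suc (Suc 0)) x y = x\<^sup>2 + y\<^sup>2"
| "power_sum_quotient (Suc (Suc (Suc 0))) x y = x\<^sup>2 + y\<^sup>2 - x * y"
| "power_sum_quotient (Suc (Suc (Suc (Suc m)))) x y =
    (x\<^sup>2 + y\<^sup>2) * power_sum_quotient (Suc (Suc m)) x y - (x * y)\<^sup>2 * power_sum_quotient m x y"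

lemma delta_Suc_Suc: "delta (Suc (Suc m)) = delta m"
  unfolding delta_def by simp

lemma power_sum_quotient_eq: "(x + y) ^ delta m * power_sum_quotient m x y = x ^ m + y ^ m"
proof (induction m x y rule: power_sum_quotient.induct)
  case (4 x y)
  then show ?case by (simp add: delta_def numeral_3_eq_3 algebra_simps power2_eq_square)
next
  case (5 m x y)
  let ?e = "(x + y) ^ delta m"
  have "(x + y) ^ delta (Suc (Suc (Suc (Suc m)))) * power_sum_quotient (Suc (Suc (Suc (Suc m)))) x y
     = (x\<^sup>2 + y\<^sup>2) * (?e * power_sum_quotient (Suc (Suc m)) x y)
       - (x * y)\<^sup>2 * (?e * power_sum_quotient m x y)"
    by (simp add: delta_Suc_Suc algebra_simps)
  also have "\<dots> = (x\<^sup>2 + y\<^sup>2) * (x ^ Suc (Suc m) + y ^ Suc (Suc m)) - (x * y)\<^sup>2 * (x ^ m + y ^ m)"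
    using 5 by (simp add: delta_Suc_Suc)
  also have "\<dots> = x ^ Suc (Suc (Suc (Suc m))) + y ^ Suc (Suc (Suc (Suc m)))"
    by (simp add: algebra_simps power2_eq_square)
  finally show ?case .
qed (simp_all add: delta_def numeral_2_eq_2)

text \<open>No hypothesis on \<open>\<beta> * a - \<alpha> * b\<close> is needed: its power absorbs the denominators
  that appear when \<open>x\<^sup>2 + y\<^sup>2\<close> and \<open>x * y\<close> are expressed through the two forms.\<close>

lemma hom_in_qforms_power_sum_quotient:
  "hom_in_qforms a b \<alpha> \<beta> (m div 2) (\<lambda>x y. (\<beta> * a - \<alpha> * b) ^ (m div 2) * power_sum_quotient m x y)"
proof (induction m "x::'a" "y::'a" rule: power_sum_quotient.induct)
  case (3 x y)
  have "hom_in_qforms a b \<alpha> \<beta> (Suc 0)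
      (\<lambda>x y. ((- b) * qform \<alpha> \<beta> x y + \<beta> * qform a b x y) * 1)"
    by (intro hom_in_qforms_mult_linear hom_in_qforms_const)
  then show ?case
    unfolding qform_sum_squares by (rule hom_in_qforms_cong) simp_all
next
  case (4 x y)
  have "hom_in_qforms a b \<alpha> \<beta> (Suc 0)
      (\<lambda>x y. ((- b) * qform \<alpha> \<beta> x y + \<beta> * qform a b x y) * 1
        + (- 1) * ((a * qform \<alpha> \<beta> x y + (- \<alpha>) * qform a b x y) * 1))"
    by (intro hom_in_qforms_add hom_in_qforms_scale hom_in_qforms_mult_linear hom_in_qforms_const)
  then show ?case
    unfolding qform_sum_squares qform_product
    by (rule hom_in_qforms_cong) (simp_all add: algebra_simps)
next
  case (5 m x y)
  define D where "D = \<beta> * a - \<alpha> * b"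
  define k where "k = m div 2"
  have IH2: "hom_in_qforms a b \<alpha> \<beta> (Suc k) (\<lambda>x y. D ^ Suc k * power_sum_quotient (Suc (Suc m)) x y)"
    using "5.IH"(1) by (simp add: D_def k_def)
  have IH0: "hom_in_qforms a b \<alpha> \<beta> k (\<lambda>x y. D ^ k * power_sum_quotient m x y)"
    using "5.IH"(2) by (simp add: D_def k_def)
  have "hom_in_qforms a b \<alpha> \<beta> (Suc (Suc k)) (\<lambda>x y.
      ((- b) * qform \<alpha> \<beta> x y + \<beta> * qform a b x y) *
        (D ^ Suc k * power_sum_quotient (Suc (Suc m)) x y)
      + (- 1) * ((a * qform \<alpha> \<beta> x y + (- \<alpha>) * qform a b x y) *
          ((a * qform \<alpha> \<beta> x y + (- \<alpha>) * qform a b x y) * (D ^ k * power_sum_quotient m x y))))"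
    by (intro hom_in_qforms_add hom_in_qforms_scale hom_in_qforms_mult_linear IH2 IH0)
  then show ?case
    unfolding qform_sum_squares qform_product D_def[symmetric] k_def[symmetric]
    by (rule hom_in_qforms_cong) (simp_all add: k_def algebra_simps power2_eq_square)
qed (simp_all add: hom_in_qforms_const)

lemma finite_affine_roots:
  fixes A B :: "'a::field"
  assumes "A \<noteq> 0 \<or> B \<noteq> 0"
  shows "finite {t. A * t = B}"
proof (cases "A = 0")
  case False
  then have "{t. A * t = B} \<subseteq> {B / A}" by (auto simp: field_simps)
  then show ?thesis by (rule finite_subset) simp
qed (use assms in simp)

text \<open>The equations force \<open>x\<^sup>2 + y\<^sup>2 = u\<close> and \<open>x * y = v\<close> for the \<open>u, v\<close> below,
  so \<open>x + y\<close> and \<open>x - y\<close> can be taken as square roots of \<open>u + 2 * v\<close> and \<open>u - 2 * v\<close>.\<close>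

lemma qforms_attain:
  fixes a b \<alpha> \<beta> t :: complex
  assumes D: "\<beta> * a - \<alpha> * b \<noteq> 0"
    and t1: "(\<beta> - 2 * \<alpha>) * t \<noteq> b - 2 * a" and t2: "(\<beta> + 2 * \<alpha>) * t \<noteq> b + 2 * a"
  shows "\<exists>x y. (x - y) * (x + y) \<noteq> 0 \<and> qform \<alpha> \<beta> x y = 1 \<and> qform a b x y = t"
proof -
  define D where "D = \<beta> * a - \<alpha> * b"
  define u where "u = (\<beta> * t - b) / D"
  define v where "v = (a - \<alpha> * t) / D"
  have "D \<noteq> 0" using assms(1) by (simp add: D_def)
  then have u_plus: "u + 2 * v = ((\<beta> - 2 * \<alpha>) * t - (b - 2 * a)) / D"
    and u_minus: "u - 2 * v = ((\<beta> + 2 * \<alpha>) * t - (b + 2 * a)) / D"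
    unfolding u_def v_def by (simp_all add: field_simps)
  define p where "p = csqrt (u + 2 * v)"
  define q where "q = csqrt (u - 2 * v)"
  have p2: "p\<^sup>2 = u + 2 * v" and q2: "q\<^sup>2 = u - 2 * v"
    unfolding p_def q_def by simp_all
  define x where "x = (p + q) / 2"
  define y where "y = (p - q) / 2"
  have "(x - y) * (x + y) = p * q"
    unfolding x_def y_def by (simp add: field_simps)
  then have "(x - y) * (x + y) \<noteq> 0"
    using p2 q2 \<open>D \<noteq> 0\<close> t1 t2 by (auto simp: u_plus u_minus)
  moreover have sq: "x\<^sup>2 + y\<^sup>2 = u" and prod: "x * y = v"
    unfolding x_def y_def using p2 q2 by (simp_all add: field_simps power2_eq_square)
  moreover have "qform \<alpha> \<beta> x y = 1"
  proof -
    have "qform \<alpha> \<beta> x y = \<alpha> * u + \<beta> * v"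
      unfolding qform_def sq[symmetric] prod[symmetric] by (simp add: algebra_simps)
    also have "\<dots> = (\<alpha> * (\<beta> * t - b) + \<beta> * (a - \<alpha> * t)) / D"
      unfolding u_def v_def by (simp add: add_divide_distrib)
    also have "\<alpha> * (\<beta> * t - b) + \<beta> * (a - \<alpha> * t) = D"
      unfolding D_def by (simp add: algebra_simps)
    finally show ?thesis using \<open>D \<noteq> 0\<close> by simp
  qed
  moreover have "qform a b x y = t"
  proof -
    have "qform a b x y = a * u + b * v"
      unfolding qform_def sq[symmetric] prod[symmetric] by (simp add: algebra_simps)
    also have "\<dots> = (a * (\<beta> * t - b) + b * (a - \<alpha> * t)) / D"
      unfolding u_def v_def by (simp add: add_divide_distrib)
    also have "a * (\<beta> * t - b) + b * (a - \<alpha> * t) = D * t"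
      unfolding D_def by (simp add: algebra_simps)
    finally show ?thesis using \<open>D \<noteq> 0\<close> by simp
  qed
  ultimately show ?thesis by blast
qed

lemma binary_form_qforms_coeffs_unique:
  fixes a b \<alpha> \<beta> :: complex
  assumes D: "\<beta> * a - \<alpha> * b \<noteq> 0"
    and eq: "\<And>x y. (x - y) * (x + y) \<noteq> 0 \<Longrightarrow>
      binary_form k c (qform \<alpha> \<beta> x y) (qform a b x y) =
      binary_form k d (qform \<alpha> \<beta> x y) (qform a b x y)"
    and "r \<le> k"
  shows "c r = d r"
proof -
  define E where "E = {t. (\<beta> - 2 * \<alpha>) * t = b - 2 * a} \<union> {t. (\<beta> + 2 * \<alpha>) * t = b + 2 * a}"
  have "\<beta> * a - \<alpha> * b = (\<beta> - 2 * \<alpha>) * a - \<alpha> * (b - 2 * a)"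
    and "\<beta> * a - \<alpha> * b = (\<beta> + 2 * \<alpha>) * a - \<alpha> * (b + 2 * a)"
    by (simp_all add: algebra_simps)
  then have "finite E"
    unfolding E_def using D by (intro finite_UnI finite_affine_roots) auto
  have "(\<Sum>i\<le>k. (c i - d i) * t ^ i) = 0" if "t \<notin> E" for t
  proof -
    obtain x y where "(x - y) * (x + y) \<noteq> 0" "qform \<alpha> \<beta> x y = 1" "qform a b x y = t"
      using qforms_attain[OF D] \<open>t \<notin> E\<close> unfolding E_def by blast
    then have "binary_form k c 1 t = binary_form k d 1 t"
      using eq by metis
    then show ?thesis
      unfolding binary_form_at_one by (simp add: algebra_simps sum_subtractf)
  qed
  then have "UNIV - E \<subseteq> {t. (\<Sum>i\<le>k. (c i - d i) * t ^ i) = 0}"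
    by blast
  moreover have "infinite (UNIV - E :: complex set)"
    using \<open>finite E\<close> by (simp add: Diff_infinite_finite infinite_UNIV_char_0)
  ultimately have "infinite {t. (\<Sum>i\<le>k. (c i - d i) * t ^ i) = 0}"
    using finite_subset by blast
  then show ?thesis
    using polyfun_finite_roots[of "\<lambda>i. c i - d i" k] \<open>r \<le> k\<close> by auto
qed

lemma the_qform_coeffs_eq:
  fixes a b \<alpha> \<beta> :: complex
  assumes D: "\<beta> * a - \<alpha> * b \<noteq> 0"
    and domain: "\<And>x y. (x - y) * (x + y) \<noteq> 0 \<Longrightarrow> S x y"
    and d: "\<And>x y. S x y \<Longrightarrow> L x y = binary_form k d (qform \<alpha> \<beta> x y) (qform a b x y)"
  shows "(THE c. (\<forall>r. k < r \<longrightarrow> c r = 0) \<and>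
      (\<forall>x y. S x y \<longrightarrow> L x y = binary_form k c (qform \<alpha> \<beta> x y) (qform a b x y)))
    = (\<lambda>r. if r \<le> k then d r else 0)"
proof (rule the_equality)
  show "(\<forall>r. k < r \<longrightarrow> (if r \<le> k then d r else 0) = 0) \<and>
      (\<forall>x y. S x y \<longrightarrow>
        L x y = binary_form k (\<lambda>r. if r \<le> k then d r else 0) (qform \<alpha> \<beta> x y) (qform a b x y))"
    using d by (auto intro: binary_form_cong)
next
  fix c
  assume c: "(\<forall>r. k < r \<longrightarrow> c r = 0) \<and>
      (\<forall>x y. S x y \<longrightarrow> L x y = binary_form k c (qform \<alpha> \<beta> x y) (qform a b x y))"
  have "c r = d r" if "r \<le> k" for r
    using binary_form_qforms_coeffs_unique[OF D _ that] c d domain by metis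
  with c show "c = (\<lambda>r. if r \<le> k then d r else 0)"
    by (auto simp: not_le)
qed

lemma Psi_expansion:
  fixes a b \<alpha> \<beta> x y :: complex
  assumes D: "\<beta> * a - \<alpha> * b \<noteq> 0" and "(x + y) ^ delta m \<noteq> 0"
  shows "(\<beta> * a - \<alpha> * b) ^ (m div 2) * ((x ^ m + y ^ m) / (x + y) ^ delta m) =
    binary_form (m div 2) (Psi a b \<alpha> \<beta> m) (qform \<alpha> \<beta> x y) (qform a b x y)"
proof -
  obtain c where c: "\<forall>r. m div 2 < r \<longrightarrow> c r = 0"
    and hom: "\<forall>x y. (\<beta> * a - \<alpha> * b) ^ (m div 2) * power_sum_quotient m x y =
      binary_form (m div 2) c (qform \<alpha> \<beta> x y) (qform a b x y)"
    using hom_in_qforms_power_sum_quotient unfolding hom_in_qforms_def by blast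
  have expand: "(\<beta> * a - \<alpha> * b) ^ (m div 2) * ((x ^ m + y ^ m) / (x + y) ^ delta m) =
      binary_form (m div 2) c (qform \<alpha> \<beta> x y) (qform a b x y)" if "(x + y) ^ delta m \<noteq> 0" for x y
    using hom power_sum_quotient_eq[of x y m, symmetric] that by simp
  have "Psi a b \<alpha> \<beta> m = (\<lambda>r. if r \<le> m div 2 then c r else 0)"
    using the_qform_coeffs_eq[OF D, of "\<lambda>x y. (x + y) ^ delta m \<noteq> 0", OF _ expand]
    unfolding Psi_def binary_form_def qform_def by simp
  also have "\<dots> = c"
    using c by (auto simp: not_le)
  finally show ?thesis
    using expand assms(2) by simp
qed

lemma Phi_coeff_eqI:
  fixes a b \<alpha> \<beta> :: complex
  assumes D: "\<beta> * a - \<alpha> * b \<noteq> 0"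
    and expansion: "\<And>x y. (x - y) * (x + y) ^ delta (m - 1) \<noteq> 0 \<Longrightarrow>
      (\<beta> * a - \<alpha> * b) ^ ((m - 1) div 2) * ((x ^ m - y ^ m) / ((x - y) * (x + y) ^ delta (m - 1))) =
      binary_form ((m - 1) div 2) d (qform \<alpha> \<beta> x y) (qform a b x y)"
    and "r \<le> (m - 1) div 2"
  shows "Phi a b \<alpha> \<beta> m r = d r"
proof -
  have "Phi a b \<alpha> \<beta> m = (\<lambda>r. if r \<le> (m - 1) div 2 then d r else 0)"
    using the_qform_coeffs_eq[OF D, of "\<lambda>x y. (x - y) * (x + y) ^ delta (m - 1) \<noteq> 0",
        OF _ expansion]
    unfolding Phi_def binary_form_def qform_def by simp
  with \<open>r \<le> (m - 1) div 2\<close> show ?thesis by simp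
qed

lemma power_sum_shift_has_field_derivative:
  fixes x y :: "'a::real_normed_field"
  shows "((\<lambda>t. (x + t) ^ Suc n + (y - t) ^ Suc n) has_field_derivative
    of_nat (Suc n) * (x ^ n - y ^ n)) (at 0)"
proof -
  have "((\<lambda>t. x + t) has_field_derivative 1) (at 0)"
    and "((\<lambda>t. y - t) has_field_derivative - 1) (at 0)"
    by (auto intro!: derivative_eq_intros)
  from DERIV_add[OF DERIV_power_Suc[OF this(1)] DERIV_power_Suc[OF this(2)]] show ?thesis
    by (rule DERIV_cong) (simp add: algebra_simps)
qed

lemma Psi_expansion_differentiated:
  fixes a b \<alpha> \<beta> x y :: complex
  assumes D: "\<beta> * a - \<alpha> * b \<noteq> 0" and xy: "(x + y) ^ delta m \<noteq> 0"
  shows "(\<beta> * a - \<alpha> * b) ^ Suc (m div 2) *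
      (of_nat (Suc (Suc m)) * (x ^ Suc m - y ^ Suc m) / (x + y) ^ delta m) =
    (x - y) * binary_form (m div 2)
      (\<lambda>r. (2 * \<alpha> - \<beta>) * of_nat (Suc (m div 2) - r) * Psi a b \<alpha> \<beta> (Suc (Suc m)) r
        + (2 * a - b) * of_nat (Suc r) * Psi a b \<alpha> \<beta> (Suc (Suc m)) (Suc r))
      (qform \<alpha> \<beta> x y) (qform a b x y)"
proof -
  define G where "G t = (\<beta> * a - \<alpha> * b) ^ Suc (m div 2) *
    (((x + t) ^ Suc (Suc m) + (y - t) ^ Suc (Suc m)) / (x + y) ^ delta m)" for t
  define c where "c = Psi a b \<alpha> \<beta> (Suc (Suc m))"
  have G_expansion: "G t = binary_form (Suc (m div 2)) c
      (qform \<alpha> \<beta> (x + t) (y - t)) (qform a b (x + t) (y - t))" for t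
    using Psi_expansion[OF D, of "x + t" "y - t" "Suc (Suc m)"] xy
    by (simp add: G_def c_def delta_Suc_Suc)
  have "(G has_field_derivative (\<beta> * a - \<alpha> * b) ^ Suc (m div 2) *
      (of_nat (Suc (Suc m)) * (x ^ Suc m - y ^ Suc m) / (x + y) ^ delta m)) (at 0)"
    unfolding G_def by (intro DERIV_cmult DERIV_cdivide power_sum_shift_has_field_derivative)
  moreover have "(G has_field_derivative binary_form (m div 2)
        (\<lambda>r. of_nat (Suc (m div 2) - r) * ((2 * \<alpha> - \<beta>) * (x - y)) * c r
          + of_nat (Suc r) * ((2 * a - b) * (x - y)) * c (Suc r))
        (qform \<alpha> \<beta> x y) (qform a b x y)) (at 0)"
    unfolding G_expansion
    using binary_form_has_field_derivative
        [OF qform_shift_has_field_derivative qform_shift_has_field_derivative]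
    by simp
  ultimately show ?thesis
    unfolding c_def binary_form_scale[symmetric]
    by (auto dest: DERIV_unique intro: binary_form_cong simp: algebra_simps)
qed

lemma Phi_expansion_via_Psi:
  fixes a b \<alpha> \<beta> x y :: complex
  assumes D: "\<beta> * a - \<alpha> * b \<noteq> 0" and "n \<ge> 1" and xy: "(x - y) * (x + y) ^ delta (n - 1) \<noteq> 0"
  shows "(\<beta> * a - \<alpha> * b) ^ ((n - 1) div 2) *
      ((x ^ n - y ^ n) / ((x - y) * (x + y) ^ delta (n - 1))) =
    binary_form ((n - 1) div 2)
      (\<lambda>r. ((2 * \<alpha> - \<beta>) * of_nat ((n + 1) div 2 - r) * Psi a b \<alpha> \<beta> (n + 1) r
        + (2 * a - b) * of_nat (r + 1) * Psi a b \<alpha> \<beta> (n + 1) (r + 1))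
        / ((\<beta> * a - \<alpha> * b) * of_nat (n + 1)))
      (qform \<alpha> \<beta> x y) (qform a b x y)"
proof -
  obtain m where n: "n = Suc m" using \<open>n \<ge> 1\<close> by (cases n) auto
  define D where "D = \<beta> * a - \<alpha> * b"
  define N :: complex where "N = of_nat (Suc (Suc m))"
  define g where "g r = (2 * \<alpha> - \<beta>) * of_nat (Suc (m div 2) - r) * Psi a b \<alpha> \<beta> (Suc (Suc m)) r
    + (2 * a - b) * of_nat (Suc r) * Psi a b \<alpha> \<beta> (Suc (Suc m)) (Suc r)" for r
  have "D \<noteq> 0" using D by (simp add: D_def)
  have "N \<noteq> 0" unfolding N_def by (rule of_nat_neq_0)
  have "x - y \<noteq> 0" and "(x + y) ^ delta m \<noteq> 0" using xy by (simp_all add: n)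
  have "D ^ (m div 2) * ((x ^ Suc m - y ^ Suc m) / ((x - y) * (x + y) ^ delta m)) =
      D ^ Suc (m div 2) * (N * (x ^ Suc m - y ^ Suc m) / (x + y) ^ delta m) / ((x - y) * D * N)"
    using \<open>x - y \<noteq> 0\<close> \<open>(x + y) ^ delta m \<noteq> 0\<close> \<open>D \<noteq> 0\<close> \<open>N \<noteq> 0\<close> by (simp add: field_simps)
  also have "\<dots> = binary_form (m div 2) g (qform \<alpha> \<beta> x y) (qform a b x y) / (D * N)"
    unfolding D_def N_def Psi_expansion_differentiated[OF D \<open>(x + y) ^ delta m \<noteq> 0\<close>] g_def
    using \<open>x - y \<noteq> 0\<close> by simp
  also have "\<dots> = binary_form (m div 2) (\<lambda>r. g r / (D * N)) (qform \<alpha> \<beta> x y) (qform a b x y)"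
    by (simp add: binary_form_def sum_divide_distrib)
  finally show ?thesis
    by (simp add: n D_def N_def g_def)
qed

theorem theorem12p1:
  fixes a b \<alpha> \<beta> :: complex and n r :: nat
  assumes "\<beta> * a - \<alpha> * b \<noteq> 0" and "n \<ge> 1" and "r \<le> (n - 1) div 2"
  shows "Phi a b \<alpha> \<beta> n r =
    ((2 * \<alpha> - \<beta>) * of_nat ((n + 1) div 2 - r) * Psi a b \<alpha> \<beta> (n + 1) r
     + (2 * a - b) * of_nat (r + 1) * Psi a b \<alpha> \<beta> (n + 1) (r + 1))
    / ((\<beta> * a - \<alpha> * b) * of_nat (n + 1))"
  by (rule Phi_coeff_eqI[OF assms(1) Phi_expansion_via_Psi[OF assms(1,2)] assms(3)])

end
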